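(* A Poisson $n$-Lie algebra $\mathcal P$ of arbitrary dimension is nilpotent if and only if both its associative part $\mathcal P_A=(\mathcal P,\cdot)$ and its $n$-Lie part $\mathcal P_L=(\mathcal P,[-,\dots,-])$ are nilpotent.
   Context: A Poisson $n$-Lie algebra is a commutative associative algebra $(\mathcal P,\cdot)$ with an $n$-linear skew-symmetric bracket satisfying the fundamental identity $[x_1,\dots,x_{n-1},[y_1,\dots,y_n]]=\sum_{i=1}^n[y_1,\dots,[x_1,\dots,x_{n-1},y_i],\dots,y_n]$ and the Leibniz rule $[y\cdot z,x_2,\dots,x_n]=y\cdot[z,x_2,\dots,x_n]+z\cdot[y,x_2,\dots,x_n]$. Products/brackets of subspaces denote linear spans. $\mathcal P$ is nilpotent if $\mathcal P^s=0$ for some $s$, where $\mathcal P^1=\mathcal P$, $\mathcal P^{k+1}=[\mathcal P^k,\mathcal P,\dots,\mathcal P]+\mathcal P^k\cdot\mathcal P$. $\mathcal P_A$ is nilpotent if all products of some fixed number $s$ of elements vanish. $\mathcal P_L$ is nilpotent if $L^s=0$ for some $s$, where $L^1=\mathcal P$, $L^{k+1}=[L^k,\mathcal P,\dots,\mathcal P]$. *)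

theory Defs
  imports Main "HOL.Vector_Spaces"
begin

text \<open>The underlying space is a
type 'a carrying a commutative associative (not necessarily unital) ring structure,
made into a 'k-vector space by scale; the multiplication is bilinear.
The n-ary bracket takes its arguments as a sequence x 0, ..., x (n-1)
(values at indices >= n are ignored).\<close>

definition poisson_nlie ::
  "('k::field \<Rightarrow> 'a::comm_ring \<Rightarrow> 'a) \<Rightarrow> nat \<Rightarrow> ((nat \<Rightarrow> 'a) \<Rightarrow> 'a) \<Rightarrow> bool" where
  "poisson_nlie scale n br \<longleftrightarrow>
     vector_space scale \<and>
     n \<ge> 2 \<and>
     (\<forall>c a b. scale c (a * b) = scale c a * b) \<and>
     (\<forall>x y. (\<forall>i<n. x i = y i) \<longrightarrow> br x = br y) \<and>
     (\<forall>x i a b. i < n \<longrightarrow> br (x(i := a + b)) = br (x(i := a)) + br (x(i := b))) \<and>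
     (\<forall>x i c a. i < n \<longrightarrow> br (x(i := scale c a)) = scale c (br (x(i := a)))) \<and>
     (\<forall>x i j. i < n \<longrightarrow> j < n \<longrightarrow> i \<noteq> j \<longrightarrow> br (x(i := x j, j := x i)) = - br x) \<and>
     (\<forall>x y. br (x(n - 1 := br y)) = (\<Sum>i<n. br (y(i := br (x(n - 1 := y i)))))) \<and>
     (\<forall>x a b. br (x(0 := a * b)) = a * br (x(0 := b)) + b * br (x(0 := a)))"

text \<open>Lower central series of the whole Poisson n-Lie algebra, indexed from 0:
 pseries k corresponds to P^(k+1).\<close>
fun pseries :: "('k::field \<Rightarrow> 'a::comm_ring \<Rightarrow> 'a) \<Rightarrow> nat \<Rightarrow> ((nat \<Rightarrow> 'a) \<Rightarrow> 'a) \<Rightarrow> nat \<Rightarrow> 'a set" where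
  "pseries scale n br 0 = UNIV"
| "pseries scale n br (Suc k) = module.span scale
     ({br x | x. x 0 \<in> pseries scale n br k} \<union> {a * b | a b. a \<in> pseries scale n br k})"

definition poisson_nilpotent :: "('k::field \<Rightarrow> 'a::comm_ring \<Rightarrow> 'a) \<Rightarrow> nat \<Rightarrow> ((nat \<Rightarrow> 'a) \<Rightarrow> 'a) \<Rightarrow> bool" where
  "poisson_nilpotent scale n br \<longleftrightarrow> (\<exists>s. pseries scale n br s = {0})"

text \<open>Lower central series of the n-Lie part, indexed from 0: lseries k = L^(k+1).\<close>
fun lseries :: "('k::field \<Rightarrow> 'a::comm_ring \<Rightarrow> 'a) \<Rightarrow> nat \<Rightarrow> ((nat \<Rightarrow> 'a) \<Rightarrow> 'a) \<Rightarrow> nat \<Rightarrow> 'a set" where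
  "lseries scale n br 0 = UNIV"
| "lseries scale n br (Suc k) = module.span scale {br x | x. x 0 \<in> lseries scale n br k}"

definition lie_nilpotent :: "('k::field \<Rightarrow> 'a::comm_ring \<Rightarrow> 'a) \<Rightarrow> nat \<Rightarrow> ((nat \<Rightarrow> 'a) \<Rightarrow> 'a) \<Rightarrow> bool" where
  "lie_nilpotent scale n br \<longleftrightarrow> (\<exists>s. lseries scale n br s = {0})"

text \<open>prodn k x = x 0 * x 1 * ... * x k (a product of k+1 elements).\<close>
fun prodn :: "nat \<Rightarrow> (nat \<Rightarrow> 'a::comm_ring) \<Rightarrow> 'a" where
  "prodn 0 x = x 0"
| "prodn (Suc k) x = prodn k x * x (Suc k)"

definition assoc_nilpotent :: "'a::comm_ring itself \<Rightarrow> bool" where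
  "assoc_nilpotent _ \<longleftrightarrow> (\<exists>k. \<forall>x::nat \<Rightarrow> 'a. prodn k x = 0)"

end

theory Submission
  imports Defs
begin

text \<open>Both the product and the bracket move elements down the lower central series of \<open>P\<close>, so
  \<open>P\<^sup>k\<close> contains all products of \<open>k\<close> elements and \<open>L\<^sup>k\<close>; this gives one direction.
  Conversely, by the Leibniz rule the bracket of a product \<open>f\<^sub>0 \<cdot> \<dots> \<cdot> f\<^sub>r\<close> with
  \<open>f\<^sub>t \<in> L\<^bsup>j\<^sub>t + 1\<^esup>\<close> is a sum of products of the same kind in which one \<open>j\<^sub>t\<close> has grown by one.
  Hence \<open>P\<^bsup>w + 1\<^esup>\<close> is spanned by such products of weight \<open>r + j\<^sub>0 + \<dots> + j\<^sub>r = w\<close>.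
  If products of \<open>k + 1\<close> elements vanish and \<open>L\<^bsup>s + 1\<^esup> = 0\<close>, a nonzero product of this kind
  has \<open>r < k\<close> and all \<open>j\<^sub>t < s\<close>, so its weight is below \<open>k s\<close>, and \<open>P\<^bsup>k s + 1\<^esup> = 0\<close>.\<close>

lemma prodn_cong: "(\<And>t. t \<le> r \<Longrightarrow> f t = g t) \<Longrightarrow> prodn r f = prodn r g"
  by (induction r) auto

lemma prodn_eq_0_mono: "prodn k f = 0 \<Longrightarrow> k \<le> r \<Longrightarrow> prodn r f = 0"
  by (induction r) (auto simp: le_Suc_eq)

lemma (in vector_space) linear_mem_span:
  assumes "Vector_Spaces.linear scale scale f" and "a \<in> span S" and "f ` S \<subseteq> span T"
  shows "f a \<in> span T"
proof -
  interpret f: Vector_Spaces.linear scale scale f by fact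
  have "f a \<in> span (f ` S)"
    using f.span_image assms(2) by blast
  also have "\<dots> \<subseteq> span T"
    using assms(3) by (simp add: span_minimal)
  finally show ?thesis .
qed

locale leibniz_bracket = vector_space scale
  for scale :: "'k::field \<Rightarrow> 'a::comm_ring \<Rightarrow> 'a" +
  fixes br :: "(nat \<Rightarrow> 'a) \<Rightarrow> 'a"
  assumes scale_mult_left: "scale c a * b = scale c (a * b)"
    and br_add: "br (x(0 := a + b)) = br (x(0 := a)) + br (x(0 := b))"
    and br_scale: "br (x(0 := scale c a)) = scale c (br (x(0 := a)))"
    and br_mult: "br (x(0 := a * b)) = a * br (x(0 := b)) + b * br (x(0 := a))"

lemma poisson_nlie_imp_leibniz_bracket:
  assumes "poisson_nlie scale n br"
  shows "leibniz_bracket scale br"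
proof -
  have "0 < n"
    using assms unfolding poisson_nlie_def by auto
  with assms show ?thesis
    unfolding poisson_nlie_def leibniz_bracket_def leibniz_bracket_axioms_def by metis
qed

context leibniz_bracket
begin

lemma linear_br: "Vector_Spaces.linear scale scale (\<lambda>a. br (x(0 := a)))"
  by (simp add: linear_iff vector_space_axioms br_add br_scale)

lemma linear_mult_right: "Vector_Spaces.linear scale scale (\<lambda>a. a * d)"
  by (simp add: linear_iff vector_space_axioms distrib_right scale_mult_left)

lemma subspace_lseries: "subspace (lseries scale n br k)"
  by (cases k) (simp_all add: subspace_UNIV subspace_span)

lemma subspace_pseries: "subspace (pseries scale n br k)"
  by (cases k) (simp_all add: subspace_UNIV subspace_span)

lemma lseries_antimono: "j \<le> k \<Longrightarrow> lseries scale n br k \<subseteq> lseries scale n br j"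
proof (rule lift_Suc_antimono_le)
  show "lseries scale n br (Suc i) \<subseteq> lseries scale n br i" for i
  proof (induction i)
    case (Suc i)
    then show ?case
      by (simp only: lseries.simps) (intro span_mono, blast)
  qed simp
qed

lemma lseries_subset_pseries: "lseries scale n br k \<subseteq> pseries scale n br k"
proof (induction k)
  case (Suc k)
  then show ?case
    by (simp only: lseries.simps pseries.simps) (intro span_mono, blast)
qed simp

lemma prodn_mem_pseries: "prodn k x \<in> pseries scale n br k"
proof (induction k)
  case (Suc k)
  then show ?case
    by (simp only: prodn.simps pseries.simps) (intro span_base, blast)
qed simp

lemma br_mem_lseries: "a \<in> lseries scale n br j \<Longrightarrow> br (x(0 := a)) \<in> lseries scale n br (Suc j)"
  by (auto intro!: span_base)

inductive lie_monomial :: "nat \<Rightarrow> nat \<Rightarrow> nat \<Rightarrow> 'a \<Rightarrow> bool" for n :: nat where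
  factor: "a \<in> lseries scale n br j \<Longrightarrow> lie_monomial n 0 j a"
| mult: "lie_monomial n r w m \<Longrightarrow> a \<in> lseries scale n br j \<Longrightarrow>
    lie_monomial n (Suc r) (w + 1 + j) (m * a)"

definition lie_monomials :: "nat \<Rightarrow> nat \<Rightarrow> 'a set" where
  "lie_monomials n w = {m. \<exists>r. lie_monomial n r w m}"

lemma lie_monomial_prodn: "lie_monomial n r w m \<Longrightarrow> \<exists>f. m = prodn r f"
proof (induction rule: lie_monomial.induct)
  case (factor a j)
  show ?case
    by (intro exI[of _ "\<lambda>_. a"]) simp
next
  case (mult r w m a j)
  then obtain f where "m = prodn r f" by blast
  moreover have "prodn r (f(Suc r := a)) = prodn r f"
    by (rule prodn_cong) simp
  ultimately have "m * a = prodn (Suc r) (f(Suc r := a))"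
    by simp
  then show ?case by blast
qed

lemma lie_monomial_weight_less:
  assumes "lseries scale n br s = {0}" and "lie_monomial n r w m" and "m \<noteq> 0"
  shows "w < Suc r * s"
proof -
  have less_s: "j < s" if "a \<in> lseries scale n br j" "a \<noteq> 0" for a j
    using that assms(1) lseries_antimono[of s j] by (cases "s \<le> j") auto
  from assms(2,3) show ?thesis
  proof (induction rule: lie_monomial.induct)
    case (factor a j)
    then show ?case using less_s by simp
  next
    case (mult r w m a j)
    then have "m \<noteq> 0" and "a \<noteq> 0"
      by auto
    then have "w < Suc r * s" and "j < s"
      using mult less_s by auto
    then show ?case by simp
  qed
qed

lemma mult_mem_span_lie_monomials:
  assumes "m \<in> span (lie_monomials n w)" and "a \<in> lseries scale n br j"
  shows "m * a \<in> span (lie_monomials n (w + 1 + j))"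
proof (rule linear_mem_span[OF linear_mult_right assms(1)])
  have "lie_monomial n r w m' \<Longrightarrow> m' * a \<in> lie_monomials n (w + 1 + j)" for r m'
    unfolding lie_monomials_def using assms(2) lie_monomial.mult by blast
  then show "(\<lambda>m'. m' * a) ` lie_monomials n w \<subseteq> span (lie_monomials n (w + 1 + j))"
    by (auto simp: lie_monomials_def intro: span_base)
qed

lemma br_lie_monomial_mem_span:
  "lie_monomial n r w m \<Longrightarrow> br (x(0 := m)) \<in> span (lie_monomials n (Suc w))"
proof (induction rule: lie_monomial.induct)
  case (factor a j)
  then have "lie_monomial n 0 (Suc j) (br (x(0 := a)))"
    by (intro lie_monomial.factor br_mem_lseries)
  then show ?case
    unfolding lie_monomials_def by (blast intro: span_base)
next
  case (mult r w m a j)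
  have "lie_monomial n (Suc r) (w + 1 + Suc j) (m * br (x(0 := a)))"
    using mult.hyps by (intro lie_monomial.mult br_mem_lseries)
  then have "m * br (x(0 := a)) \<in> span (lie_monomials n (Suc (w + 1 + j)))"
    unfolding lie_monomials_def by (auto intro: span_base)
  moreover have "br (x(0 := m)) * a \<in> span (lie_monomials n (Suc (w + 1 + j)))"
    using mult_mem_span_lie_monomials[OF mult.IH mult.hyps(2)] by (simp only: add_Suc)
  ultimately show ?case
    unfolding br_mult by (metis span_add mult.commute)
qed

lemma pseries_subset_span_lie_monomials: "pseries scale n br w \<subseteq> span (lie_monomials n w)"
proof (induction w)
  case 0
  have "lie_monomial n 0 0 a" for a
    by (rule lie_monomial.factor) simp
  then show ?case
    by (auto simp: lie_monomials_def intro: span_base)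
next
  case (Suc w)
  have "br x \<in> span (lie_monomials n (Suc w))" if "x 0 \<in> pseries scale n br w" for x
  proof -
    have "br (x(0 := x 0)) \<in> span (lie_monomials n (Suc w))"
      using Suc that br_lie_monomial_mem_span
      by (intro linear_mem_span[OF linear_br, of "x 0" "lie_monomials n w"])
        (auto simp: lie_monomials_def)
    then show ?thesis by simp
  qed
  moreover have "a * b \<in> span (lie_monomials n (Suc w))" if "a \<in> pseries scale n br w" for a b
    using mult_mem_span_lie_monomials[of a n w b 0] Suc that by auto
  ultimately show ?case
    by (simp only: pseries.simps) (intro span_minimal subspace_span, blast)
qed

lemma lie_monomials_subset_0:
  assumes "\<forall>x::nat \<Rightarrow> 'a. prodn k x = 0" and "lseries scale n br s = {0}"
  shows "lie_monomials n (k * s) \<subseteq> {0}"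
proof
  fix m assume "m \<in> lie_monomials n (k * s)"
  then obtain r where m: "lie_monomial n r (k * s) m"
    by (auto simp: lie_monomials_def)
  show "m \<in> {0}"
  proof (rule ccontr)
    assume "m \<notin> {0}"
    then have "m \<noteq> 0" by simp
    obtain f where "m = prodn r f"
      using lie_monomial_prodn[OF m] by blast
    with \<open>m \<noteq> 0\<close> have "\<not> k \<le> r"
      using prodn_eq_0_mono[OF assms(1)[rule_format, of f], of r] by auto
    then have "Suc r * s \<le> k * s"
      by (intro mult_le_mono1) simp
    moreover have "k * s < Suc r * s"
      using lie_monomial_weight_less[OF assms(2) m \<open>m \<noteq> 0\<close>] .
    ultimately show False
      by simp
  qed
qed

lemma pseries_eq_0:
  assumes "\<forall>x::nat \<Rightarrow> 'a. prodn k x = 0" and "lseries scale n br s = {0}"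
  shows "pseries scale n br (k * s) = {0}"
proof -
  have "pseries scale n br (k * s) \<subseteq> span (lie_monomials n (k * s))"
    by (rule pseries_subset_span_lie_monomials)
  also have "\<dots> \<subseteq> {0}"
    using lie_monomials_subset_0[OF assms] by (intro span_minimal subspace_single_0)
  finally show ?thesis
    using subspace_0[OF subspace_pseries] by blast
qed

end

theorem proposition5p4:
  fixes scale :: "'k::field \<Rightarrow> 'a::comm_ring \<Rightarrow> 'a"
    and n :: nat and br :: "(nat \<Rightarrow> 'a) \<Rightarrow> 'a"
  assumes "poisson_nlie scale n br"
  shows "poisson_nilpotent scale n br \<longleftrightarrow>
         assoc_nilpotent TYPE('a) \<and> lie_nilpotent scale n br"
proof -
  interpret leibniz_bracket scale br
    using poisson_nlie_imp_leibniz_bracket[OF assms] .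
  show ?thesis
  proof
    assume "poisson_nilpotent scale n br"
    then obtain s where s: "pseries scale n br s = {0}"
      unfolding poisson_nilpotent_def by blast
    then have "\<forall>x::nat \<Rightarrow> 'a. prodn s x = 0"
      using prodn_mem_pseries by blast
    moreover have "lseries scale n br s = {0}"
      using s lseries_subset_pseries subspace_0[OF subspace_lseries] by blast
    ultimately show "assoc_nilpotent TYPE('a) \<and> lie_nilpotent scale n br"
      unfolding assoc_nilpotent_def lie_nilpotent_def by blast
  next
    assume "assoc_nilpotent TYPE('a) \<and> lie_nilpotent scale n br"
    then obtain k s where "\<forall>x::nat \<Rightarrow> 'a. prodn k x = 0" and "lseries scale n br s = {0}"
      unfolding assoc_nilpotent_def lie_nilpotent_def by blast
    then show "poisson_nilpotent scale n br"
      unfolding poisson_nilpotent_def using pseries_eq_0 by blast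
  qed
qed

end
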